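(* Let $a\ge6$ and $n\ge1$ be integers and let $P_{0,n}$, $P_{l,n}$ be as in the context. Then for every $l\in\{1,\dots,a\}$, $$2d_n^{a-l}P_{l,n}(z)\in\mathbb{Z}[z]\qquad\text{and}\qquad 2d_n^{a+2}P_{0,n}(z)\in\mathbb{Z}[z],$$ where $d_n=\mathrm{lcm}(1,2,\dots,n)$.
   Context: Fix an integer $a\ge 6$. For complex $x$ and integer $m\ge0$, $(x)_m=x(x+1)\cdots(x+m-1)$. For an integer $n\ge1$ define $$R_n(t)=n!^{a-6}\left(t+\frac n2\right)\frac{(t-n)_n^3\,(t+n+1)_n^3}{(t)_{n+1}^a}.$$ Let $D_\lambda=\frac1{\lambda!}\left(\frac{d}{dt}\right)^\lambda$ and, for $l\in\{1,\dots,a\}$, $j\in\{0,\dots,n\}$, put $c_{l,j,n}=D_{a-l}\big(R_n(t)(t+j)^a\big)\big|_{t=-j}$. Define $$P_{0,n}(z)=-\sum_{l=1}^a\sum_{j=1}^n\sum_{k=1}^{j}\frac{l(l+1)\,c_{l,j,n}}{2k^{l+2}}z^{j-k},\qquad P_{l,n}(z)=\sum_{j=0}^n c_{l,j,n}z^j\quad(1\le l\le a).$$ *)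

theory Defs
  imports "HOL-Analysis.Analysis" "HOL-Computational_Algebra.Polynomial"
begin

text \<open>R_n(t), as a complex function (poles at t = 0,-1,...,-n, where HOL division gives 0).\<close>
definition R :: "nat \<Rightarrow> nat \<Rightarrow> complex \<Rightarrow> complex" where
  "R a n t = of_nat (fact n) ^ (a - 6) * (t + of_nat n / 2)
     * pochhammer (t - of_nat n) n ^ 3 * pochhammer (t + of_nat n + 1) n ^ 3
     / pochhammer t (n + 1) ^ a"

text \<open>t \<mapsto> R_n(t)(t+j)^a, extended to t = -j by its limit (removable singularity).\<close>
definition Rj :: "nat \<Rightarrow> nat \<Rightarrow> nat \<Rightarrow> complex \<Rightarrow> complex" where
  "Rj a n j t = (if t = - of_nat j
      then Lim (at (- of_nat j)) (\<lambda>s. R a n s * (s + of_nat j) ^ a)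
      else R a n t * (t + of_nat j) ^ a)"

definition Dop :: "nat \<Rightarrow> (complex \<Rightarrow> complex) \<Rightarrow> complex \<Rightarrow> complex" where
  "Dop lam f x = (deriv ^^ lam) f x / of_nat (fact lam)"

definition c :: "nat \<Rightarrow> nat \<Rightarrow> nat \<Rightarrow> nat \<Rightarrow> complex" where
  "c a l j n = Dop (a - l) (Rj a n j) (- of_nat j)"

definition P0 :: "nat \<Rightarrow> nat \<Rightarrow> complex poly" where
  "P0 a n = - (\<Sum>l=1..a. \<Sum>j=1..n. \<Sum>k=1..j.
      monom (of_nat (l * (l + 1)) * c a l j n / (2 * of_nat k ^ (l + 2))) (j - k))"

definition Pl :: "nat \<Rightarrow> nat \<Rightarrow> nat \<Rightarrow> complex poly" where
  "Pl a l n = (\<Sum>j=0..n. monom (c a l j n) j)"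

definition d :: "nat \<Rightarrow> nat" where
  "d n = Lcm {1..n}"

definition int_poly :: "complex poly \<Rightarrow> bool" where
  "int_poly p \<longleftrightarrow> (\<forall>i. coeff p i \<in> \<int>)"

end

theory Submission
  imports Defs "HOL-Complex_Analysis.Complex_Analysis"
begin

text \<open>
  Near \<open>t = -j\<close> write \<open>R_n(t) (t+j)^a = (t + n/2) F_1(t)^3 F_2(t)^3 F_3(t)^(a-6)\<close> with
  \<open>F(t) = (t+j) P(t) / (t)_(n+1)\<close> for the polynomials \<open>P = (t-n)_n, (t+n+1)_n, n!\<close> of
  degree at most \<open>n\<close>. Partial fractions give \<open>F(t) = A_j + \<Sum>_(k\<noteq>j) A_k (t+j)/(t+k)\<close> with
  \<open>A_k = (-1)^k binom(n,k) P(-k)/n!\<close>, an integer for each of the three polynomials, and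
  the \<open>m\<close>-th Taylor coefficient of \<open>(t+j)/(t+k) = 1 - (k-j)/(t+k)\<close> at \<open>-j\<close> is
  \<open>-(j-k)^(-m)\<close> for \<open>m \<ge> 1\<close>, which becomes an integer after multiplication by \<open>d_n^m\<close>.
  The functions whose \<open>m\<close>-th Taylor coefficients at a point become integers after
  multiplication by \<open>D^m\<close> form a ring, so \<open>2 d_n^(a-l) c_(l,j,n)\<close> is an integer.
  For \<open>P_0\<close> it remains to note that \<open>l(l+1)/2\<close> and \<open>d_n^(l+2) / k^(l+2)\<close> are integers.
\<close>

definition int_scaled_taylor :: "int \<Rightarrow> complex \<Rightarrow> (complex \<Rightarrow> complex) \<Rightarrow> bool" where
  "int_scaled_taylor D x f \<longleftrightarrow>
     f analytic_on {x} \<and> (\<forall>m. of_int D ^ m * (deriv ^^ m) f x / fact m \<in> \<int>)"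

lemma int_scaled_taylor_const: "z \<in> \<int> \<Longrightarrow> int_scaled_taylor D x (\<lambda>_. z)"
  unfolding int_scaled_taylor_def by auto

lemma int_scaled_taylor_ident: "x \<in> \<int> \<Longrightarrow> int_scaled_taylor D x (\<lambda>t. t)"
  unfolding int_scaled_taylor_def by auto

lemma int_scaled_taylor_add:
  "int_scaled_taylor D x f \<Longrightarrow> int_scaled_taylor D x g \<Longrightarrow> int_scaled_taylor D x (\<lambda>t. f t + g t)"
  unfolding int_scaled_taylor_def
  by (auto simp: higher_deriv_add_at add_divide_distrib distrib_left intro: analytic_on_add)

lemma int_scaled_taylor_mult:
  assumes "int_scaled_taylor D x f" "int_scaled_taylor D x g"
  shows "int_scaled_taylor D x (\<lambda>t. f t * g t)"
proof -
  have f: "f analytic_on {x}" and g: "g analytic_on {x}"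
    using assms unfolding int_scaled_taylor_def by auto
  show ?thesis unfolding int_scaled_taylor_def
  proof (intro conjI allI)
    show "(\<lambda>t. f t * g t) analytic_on {x}" using f g by (rule analytic_on_mult)
    fix m
    have "of_int D ^ m * (deriv ^^ m) (\<lambda>t. f t * g t) x / fact m
       = (\<Sum>i = 0..m. (of_int D ^ i * (deriv ^^ i) f x / fact i) *
            (of_int D ^ (m - i) * (deriv ^^ (m - i)) g x / fact (m - i)))"
      unfolding higher_deriv_mult_at[OF f g] sum_distrib_left sum_divide_distrib
    proof (intro sum.cong refl)
      fix i assume "i \<in> {0..m}"
      then have "i \<le> m" by simp
      then have "(of_nat (m choose i) :: complex) = fact m / (fact i * fact (m - i))"
        and "(of_int D :: complex) ^ m = of_int D ^ i * of_int D ^ (m - i)"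
        by (simp_all add: binomial_fact flip: power_add)
      then show "of_int D ^ m * (of_nat (m choose i) * (deriv ^^ i) f x * (deriv ^^ (m - i)) g x) / fact m
        = of_int D ^ i * (deriv ^^ i) f x / fact i * (of_int D ^ (m - i) * (deriv ^^ (m - i)) g x / fact (m - i))"
        by (simp add: field_simps)
    qed
    also have "\<dots> \<in> \<int>"
      using assms unfolding int_scaled_taylor_def by (intro Ints_sum Ints_mult) auto
    finally show "of_int D ^ m * (deriv ^^ m) (\<lambda>t. f t * g t) x / fact m \<in> \<int>" .
  qed
qed

lemma int_scaled_taylor_power:
  "int_scaled_taylor D x f \<Longrightarrow> int_scaled_taylor D x (\<lambda>t. f t ^ k)"
  by (induction k) (simp_all add: int_scaled_taylor_const int_scaled_taylor_mult)

lemma int_scaled_taylor_sum: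
  "(\<And>i. i \<in> A \<Longrightarrow> int_scaled_taylor D x (f i)) \<Longrightarrow> int_scaled_taylor D x (\<lambda>t. \<Sum>i\<in>A. f i t)"
  by (induction A rule: infinite_finite_induct)
    (simp_all add: int_scaled_taylor_const int_scaled_taylor_add)

lemma int_scaled_taylor_cong:
  "int_scaled_taylor D x f \<Longrightarrow> \<forall>\<^sub>F t in nhds x. f t = g t \<Longrightarrow> int_scaled_taylor D x g"
  unfolding int_scaled_taylor_def by (metis analytic_at_cong higher_deriv_cong_ev)

lemma isCont_eventually_nhds_neq:
  fixes f :: "'a::t2_space \<Rightarrow> 'b::t1_space"
  shows "isCont f x \<Longrightarrow> f x \<noteq> b \<Longrightarrow> \<forall>\<^sub>F y in nhds x. f y \<noteq> b"
  by (metis isCont_def tendsto_at_iff_tendsto_nhds tendsto_imp_eventually_ne)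

lemma higher_deriv_inverse_add:
  fixes w z :: complex
  assumes "z + w \<noteq> 0"
  shows "(deriv ^^ m) (\<lambda>t. inverse (t + w)) z = (-1) ^ m * fact m * inverse (z + w) ^ Suc m"
  using assms
proof (induction m arbitrary: z)
  case 0
  then show ?case by simp
next
  case (Suc m z)
  have "\<forall>\<^sub>F t in nhds z. t + w \<noteq> 0"
    using Suc.prems by (intro isCont_eventually_nhds_neq continuous_intros)
  then have "\<forall>\<^sub>F t in nhds z. (deriv ^^ m) (\<lambda>t. inverse (t + w)) t = (-1) ^ m * fact m * inverse (t + w) ^ Suc m"
    by eventually_elim (use Suc.IH in auto)
  then have "(deriv ^^ Suc m) (\<lambda>t. inverse (t + w)) z = deriv (\<lambda>t. (-1) ^ m * fact m * inverse (t + w) ^ Suc m) z"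
    by (simp add: deriv_cong_ev)
  also have "\<dots> = (-1) ^ Suc m * fact (Suc m) * inverse (z + w) ^ Suc (Suc m)"
    by (rule DERIV_imp_deriv, (rule derivative_eq_intros refl | use Suc.prems in simp)+)
  finally show ?case .
qed

lemma int_scaled_taylor_inverse:
  assumes "x + w \<noteq> 0" "of_int D / (x + w) \<in> \<int>"
  shows "int_scaled_taylor D x (\<lambda>t. (x + w) / (t + w))"
  unfolding int_scaled_taylor_def
proof (intro conjI allI)
  have inv: "(\<lambda>t. inverse (t + w)) analytic_on {x}"
    using assms(1) by (intro analytic_intros) auto
  then show "(\<lambda>t. (x + w) / (t + w)) analytic_on {x}"
    by (simp add: divide_inverse analytic_intros)
  fix m
  have "(deriv ^^ m) (\<lambda>t. (x + w) / (t + w)) x = (x + w) * ((-1) ^ m * fact m * inverse (x + w) ^ Suc m)"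
    using higher_deriv_cmult'[OF inv, of m "x + w"] assms(1)
    by (simp add: divide_inverse higher_deriv_inverse_add)
  also have "\<dots> = (-1) ^ m * fact m * inverse (x + w) ^ m"
    using assms(1) by simp
  finally have "of_int D ^ m * (deriv ^^ m) (\<lambda>t. (x + w) / (t + w)) x / fact m
      = (- 1) ^ m * (of_int D / (x + w)) ^ m"
    by (simp add: power_mult_distrib divide_inverse)
  also have "\<dots> \<in> \<int>" using assms(2) by (intro Ints_mult Ints_power Ints_minus Ints_1)
  finally show "of_int D ^ m * (deriv ^^ m) (\<lambda>t. (x + w) / (t + w)) x / fact m \<in> \<int>" .
qed

lemma int_scaled_taylor_shift_quotient:
  fixes j k :: nat
  assumes "k \<noteq> j" "(int k - int j) dvd D"
  shows "int_scaled_taylor D (- of_nat j) (\<lambda>t. (t + of_nat j) / (t + of_nat k))"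
proof -
  define u :: complex where "u = - of_nat j + of_nat k"
  have u: "u \<noteq> 0" using assms(1) by (simp add: u_def)
  obtain q where "D = (int k - int j) * q" using assms(2) by (elim dvdE)
  then have "of_int D = u * of_int q" by (simp add: u_def)
  then have "of_int D / u = of_int q" using u by simp
  then have "int_scaled_taylor D (- of_nat j) (\<lambda>t. 1 + (-1) * (u / (t + of_nat k)))"
    using u unfolding u_def
    by (intro int_scaled_taylor_add int_scaled_taylor_mult int_scaled_taylor_const
        int_scaled_taylor_inverse) auto
  moreover have "\<forall>\<^sub>F t in nhds (- of_nat j). t + of_nat k \<noteq> (0::complex)"
    by (intro isCont_eventually_nhds_neq continuous_intros) (use u in \<open>simp add: u_def\<close>)
  then have "\<forall>\<^sub>F t in nhds (- of_nat j). 1 + (-1) * (u / (t + of_nat k)) = (t + of_nat j) / (t + of_nat k)"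
    by eventually_elim (simp add: u_def field_simps)
  ultimately show ?thesis by (rule int_scaled_taylor_cong)
qed

lemma prod_of_nat_diff_eq:
  assumes "k \<le> n"
  shows "(\<Prod>i\<in>{0..n}-{k}. (of_nat i - of_nat k :: 'a::{comm_ring_1,ring_char_0})) = (-1) ^ k * fact k * fact (n - k)"
proof -
  have split: "{0..n}-{k} = {0..<k} \<union> (\<lambda>m. m + Suc k) ` {0..<n-k}"
  proof (intro equalityI subsetI)
    fix i assume i: "i \<in> {0..n}-{k}"
    show "i \<in> {0..<k} \<union> (\<lambda>m. m + Suc k) ` {0..<n-k}"
    proof (cases "i < k")
      case False
      then have "i = (i - Suc k) + Suc k" "i - Suc k \<in> {0..<n-k}" using i by auto
      then show ?thesis by blast
    qed simp
  qed (use assms in auto)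
  have "(\<Prod>i\<in>{0..n}-{k}. (of_nat i - of_nat k :: 'a))
      = (\<Prod>i\<in>{0..<k}. of_nat i - of_nat k) * (\<Prod>i\<in>(\<lambda>m. m + Suc k) ` {0..<n-k}. of_nat i - of_nat k)"
    unfolding split by (rule prod.union_disjoint) auto
  also have "(\<Prod>i\<in>{0..<k}. (of_nat i - of_nat k :: 'a)) = pochhammer (- of_nat k) k"
    by (simp add: pochhammer_prod)
  also have "\<dots> = (-1) ^ k * fact k"
    by (simp add: pochhammer_minus pochhammer_fact)
  also have "(\<Prod>i\<in>(\<lambda>m. m + Suc k) ` {0..<n-k}. (of_nat i - of_nat k :: 'a)) = pochhammer 1 (n - k)"
    by (subst prod.reindex) (auto simp: inj_on_def pochhammer_prod algebra_simps)
  also have "\<dots> = fact (n - k)"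
    by (simp add: pochhammer_fact)
  finally show ?thesis by simp
qed

lemma lagrange_interpolation_neg_nats:
  fixes P :: "'a::field_char_0 poly"
  assumes "degree P \<le> n"
  shows "P = (\<Sum>k=0..n. smult (poly P (- of_nat k) / (\<Prod>i\<in>{0..n}-{k}. of_nat i - of_nat k))
                                (\<Prod>i\<in>{0..n}-{k}. [:of_nat i, 1:]))"
    (is "P = (\<Sum>k=0..n. smult (?A k) (?L k))")
proof (rule poly_eqI_degree)
  fix x assume "x \<in> (\<lambda>m. - of_nat m :: 'a) ` {0..n}"
  then obtain m where m: "m \<le> n" "x = - of_nat m" by auto
  have "poly (?L k) x = 0" if "k \<le> n" "k \<noteq> m" for k
    using m that by (auto simp: poly_prod prod_zero_iff)
  then have "poly (\<Sum>k=0..n. smult (?A k) (?L k)) x = ?A m * poly (?L m) x"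
    using m by (simp add: poly_sum sum.remove[of _ m])
  also have "\<dots> = poly P x"
    using m by (simp add: poly_prod prod_zero_iff)
  finally show "poly P x = poly (\<Sum>k=0..n. smult (?A k) (?L k)) x" ..
next
  have "card ((\<lambda>m. - of_nat m :: 'a) ` {0..n}) = Suc n"
    by (subst card_image) (auto simp: inj_on_def)
  moreover have "degree (?L k) \<le> n" if "k \<le> n" for k
    using that degree_prod_sum_le[of "{0..n}-{k}" "\<lambda>i. [:of_nat i, 1:] :: 'a poly"] by (simp add: o_def)
  then have "degree (\<Sum>k=0..n. smult (?A k) (?L k)) \<le> n"
    by (intro degree_sum_le) (auto intro: order.trans[OF degree_smult_le])
  ultimately show "degree P < card ((\<lambda>m. - of_nat m :: 'a) ` {0..n})"
    "degree (\<Sum>k=0..n. smult (?A k) (?L k)) < card ((\<lambda>m. - of_nat m :: 'a) ` {0..n})"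
    using assms by auto
qed

lemma pochhammer_partial_fractions:
  fixes P :: "'a::field_char_0 poly"
  assumes "degree P \<le> n" "pochhammer t (Suc n) \<noteq> 0"
  shows "poly P t / pochhammer t (Suc n)
    = (\<Sum>k=0..n. (-1) ^ k * of_nat (n choose k) * (poly P (- of_nat k) / fact n) / (t + of_nat k))"
proof -
  have poch: "pochhammer t (Suc n) = (\<Prod>i\<in>{0..n}. t + of_nat i)"
    by (simp add: pochhammer_prod atLeastLessThanSuc_atLeastAtMost)
  have "poly P t = (\<Sum>k=0..n. poly P (- of_nat k) / (\<Prod>i\<in>{0..n}-{k}. of_nat i - of_nat k)
                               * (\<Prod>i\<in>{0..n}-{k}. t + of_nat i))"
    by (subst lagrange_interpolation_neg_nats[OF assms(1)])
      (simp add: poly_sum poly_prod add.commute)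
  also have "\<dots> = (\<Sum>k=0..n. (-1) ^ k * of_nat (n choose k) * (poly P (- of_nat k) / fact n)
                               * (\<Prod>i\<in>{0..n}-{k}. t + of_nat i))"
    by (intro sum.cong refl)
      (simp add: prod_of_nat_diff_eq binomial_fact field_simps)
  finally have "poly P t / pochhammer t (Suc n) = (\<Sum>k=0..n. (-1) ^ k * of_nat (n choose k) * (poly P (- of_nat k) / fact n)
                               * (\<Prod>i\<in>{0..n}-{k}. t + of_nat i) / (\<Prod>i\<in>{0..n}. t + of_nat i))"
    by (simp add: poch sum_divide_distrib)
  also have "\<dots> = (\<Sum>k=0..n. (-1) ^ k * of_nat (n choose k) * (poly P (- of_nat k) / fact n) / (t + of_nat k))"
  proof (intro sum.cong refl)
    fix k assume k: "k \<in> {0..n}"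
    then have split: "(\<Prod>i\<in>{0..n}. t + of_nat i) = (t + of_nat k) * (\<Prod>i\<in>{0..n}-{k}. t + of_nat i)"
      by (simp add: prod.remove)
    then have "(\<Prod>i\<in>{0..n}-{k}. t + of_nat i) \<noteq> 0" using assms(2) poch by auto
    then show "(-1) ^ k * of_nat (n choose k) * (poly P (- of_nat k) / fact n) * (\<Prod>i\<in>{0..n}-{k}. t + of_nat i)
        / (\<Prod>i\<in>{0..n}. t + of_nat i) = (-1) ^ k * of_nat (n choose k) * (poly P (- of_nat k) / fact n) / (t + of_nat k)"
      unfolding split by (rule nonzero_mult_divide_mult_cancel_right)
  qed
  finally show ?thesis .
qed

lemma eventually_at_pochhammer_nonzero:
  "\<forall>\<^sub>F t in at (x :: 'a::real_normed_field). pochhammer t n \<noteq> 0"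
proof -
  have "{t. pochhammer t n = (0::'a)} = (\<lambda>k. - of_nat k) ` {..<n}"
    by (auto simp: pochhammer_eq_0_iff)
  then have "\<not> x islimpt {t. pochhammer t n = (0::'a)}"
    by (simp add: islimpt_finite)
  then show ?thesis
    by (simp add: islimpt_iff_eventually)
qed

lemma int_scaled_taylor_pochhammer_quotient:
  fixes P :: "complex poly" and j n :: nat
  assumes deg: "degree P \<le> n" and j: "j \<le> n"
    and vals: "\<And>k. k \<le> n \<Longrightarrow> poly P (- of_nat k) / fact n \<in> \<int>"
    and dvd: "\<And>k. k \<le> n \<Longrightarrow> k \<noteq> j \<Longrightarrow> (int k - int j) dvd D"
  shows "\<exists>f. int_scaled_taylor D (- of_nat j) f \<and>
    (\<forall>\<^sub>F t in at (- of_nat j). f t = (t + of_nat j) * poly P t / pochhammer t (Suc n))"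
proof -
  define A where "A k = (-1) ^ k * of_nat (n choose k) * (poly P (- of_nat k) / fact n)" for k
  define f where "f t = A j + (\<Sum>k\<in>{0..n}-{j}. A k * ((t + of_nat j) / (t + of_nat k)))" for t
  have A: "A k \<in> \<int>" if "k \<le> n" for k
    using vals[OF that] unfolding A_def by (intro Ints_mult Ints_power Ints_minus Ints_1 Ints_of_nat)
  have "int_scaled_taylor D (- of_nat j) f"
    unfolding f_def[abs_def] using j
    by (intro int_scaled_taylor_add int_scaled_taylor_const int_scaled_taylor_sum
        int_scaled_taylor_mult int_scaled_taylor_shift_quotient A dvd) auto
  moreover have "\<forall>\<^sub>F t in at (- of_nat j). f t = (t + of_nat j) * poly P t / pochhammer t (Suc n)"
    using eventually_at_pochhammer_nonzero
  proof eventually_elim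
    fix t :: complex assume t: "pochhammer t (Suc n) \<noteq> 0"
    then have "t \<noteq> - of_nat j" using j by (auto simp: pochhammer_eq_0_iff)
    then have tj: "t + of_nat j \<noteq> 0" by (metis eq_neg_iff_add_eq_0)
    have "(t + of_nat j) * poly P t / pochhammer t (Suc n) = (t + of_nat j) * (\<Sum>k=0..n. A k / (t + of_nat k))"
      by (simp only: times_divide_eq_right[symmetric] pochhammer_partial_fractions[OF deg t] A_def)
    also have "\<dots> = (\<Sum>k=0..n. A k * ((t + of_nat j) / (t + of_nat k)))"
      by (simp add: sum_distrib_left mult.commute)
    also have "\<dots> = f t"
      using j tj by (simp add: f_def sum.remove)
    finally show "f t = (t + of_nat j) * poly P t / pochhammer t (Suc n)" ..
  qed
  ultimately show ?thesis by blast
qed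

definition pochhammer_poly :: "'a::comm_semiring_1 \<Rightarrow> nat \<Rightarrow> 'a poly" where
  "pochhammer_poly w n = (\<Prod>i<n. [:w + of_nat i, 1:])"

lemma poly_pochhammer_poly: "poly (pochhammer_poly w n) t = pochhammer (t + w) n"
  unfolding pochhammer_poly_def pochhammer_prod
  by (simp add: poly_prod atLeast0LessThan algebra_simps)

lemma degree_pochhammer_poly: "degree (pochhammer_poly w n) \<le> n"
  unfolding pochhammer_poly_def
  using degree_prod_sum_le[of "{..<n}" "\<lambda>i. [:w + of_nat i, 1:]"] by (simp add: o_def)

lemma pochhammer_div_fact_Ints:
  assumes "x \<in> \<int>"
  shows "pochhammer x m / fact m \<in> (\<int> :: 'a::field_char_0 set)"
proof -
  obtain b where b: "x = of_int b" using assms by (elim Ints_cases)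
  obtain r where "pochhammer b m = fact m * r" using fact_dvd_pochhammer[of m b] by (elim dvdE)
  then have "pochhammer x m / fact m = of_int r"
    unfolding b pochhammer_of_int by simp
  then show ?thesis by simp
qed

lemma dvd_d: "1 \<le> k \<Longrightarrow> k \<le> n \<Longrightarrow> k dvd d n"
  unfolding d_def by (simp add: dvd_Lcm)

lemma diff_dvd_d:
  assumes "j \<le> n" "k \<le> n" "k \<noteq> j"
  shows "(int k - int j) dvd int (d n)"
proof -
  have "nat \<bar>int k - int j\<bar> dvd d n"
    using assms by (intro dvd_d) auto
  then show ?thesis
    by (simp flip: int_dvd_int_iff)
qed

lemma R_mult_power_factorization:
  assumes "a \<ge> 6" "pochhammer t (Suc n) \<noteq> 0"
  shows "R a n t * (t + of_nat j) ^ a = (2 * t + of_nat n) / 2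
    * ((t + of_nat j) * pochhammer (t - of_nat n) n / pochhammer t (Suc n)) ^ 3
    * ((t + of_nat j) * pochhammer (t + of_nat n + 1) n / pochhammer t (Suc n)) ^ 3
    * ((t + of_nat j) * fact n / pochhammer t (Suc n)) ^ (a - 6)"
proof -
  obtain b where a: "a = b + 6" using assms(1) by (metis add.commute le_Suc_ex)
  define u where "u = t + of_nat j"
  define p1 where "p1 = pochhammer (t - of_nat n) n"
  define p2 where "p2 = pochhammer (t + of_nat n + 1) n"
  define q where "q = pochhammer t (Suc n)"
  have "(2 * t + of_nat n) / 2 * (u * p1 / q) ^ 3 * (u * p2 / q) ^ 3 * (u * fact n / q) ^ b
      = fact n ^ b * (t + of_nat n / 2) * p1 ^ 3 * p2 ^ 3 / q ^ (b + 6) * u ^ (b + 6)"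
    using assms(2) unfolding q_def[symmetric]
    by (simp add: power_mult_distrib power_divide power_add field_simps)
  then show ?thesis
    unfolding R_def a u_def p1_def p2_def q_def by simp
qed

lemma int_scaled_taylor_R:
  assumes "a \<ge> 6" "j \<le> n"
  shows "\<exists>h. int_scaled_taylor (int (d n)) (- of_nat j) h \<and>
    (\<forall>\<^sub>F t in at (- of_nat j). R a n t * (t + of_nat j) ^ a = h t / 2)"
proof -
  have dvd: "(int k - int j) dvd int (d n)" if "k \<le> n" "k \<noteq> j" for k
    using assms(2) that by (rule diff_dvd_d)
  have vals: "poly (pochhammer_poly w n) (- of_nat k) / fact n \<in> \<int>" if "w \<in> \<int>" for w :: complex and k
    using that by (simp add: poly_pochhammer_poly pochhammer_div_fact_Ints)
  obtain f1 where f1: "int_scaled_taylor (d n) (- of_nat j) f1"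
    "\<forall>\<^sub>F t in at (- of_nat j). f1 t = (t + of_nat j) * pochhammer (t - of_nat n) n / pochhammer t (Suc n)"
    using int_scaled_taylor_pochhammer_quotient[OF degree_pochhammer_poly assms(2) vals dvd, of "- of_nat n"]
    by (auto simp: poly_pochhammer_poly)
  obtain f2 where f2: "int_scaled_taylor (d n) (- of_nat j) f2"
    "\<forall>\<^sub>F t in at (- of_nat j). f2 t = (t + of_nat j) * pochhammer (t + of_nat n + 1) n / pochhammer t (Suc n)"
    using int_scaled_taylor_pochhammer_quotient[OF degree_pochhammer_poly assms(2) vals dvd, of "of_nat n + 1"]
    by (auto simp: poly_pochhammer_poly add.assoc)
  obtain f3 where f3: "int_scaled_taylor (d n) (- of_nat j) f3"
    "\<forall>\<^sub>F t in at (- of_nat j). f3 t = (t + of_nat j) * fact n / pochhammer t (Suc n)"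
    using int_scaled_taylor_pochhammer_quotient[of "[:fact n:]" n j, OF _ assms(2) _ dvd] by auto
  define h where "h t = (2 * t + of_nat n) * f1 t ^ 3 * f2 t ^ 3 * f3 t ^ (a - 6)" for t
  have "int_scaled_taylor (d n) (- of_nat j) h"
    unfolding h_def[abs_def]
    by (intro int_scaled_taylor_mult int_scaled_taylor_power int_scaled_taylor_add
        int_scaled_taylor_const int_scaled_taylor_ident f1 f2 f3) auto
  moreover have "\<forall>\<^sub>F t in at (- of_nat j). R a n t * (t + of_nat j) ^ a = h t / 2"
    using f1(2) f2(2) f3(2) eventually_at_pochhammer_nonzero[where n = "Suc n"]
    by eventually_elim (subst R_mult_power_factorization[OF assms(1)], simp_all add: h_def)
  ultimately show ?thesis by blast
qed

lemma Lim_extension_eventually_eq: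
  fixes g h :: "'a::{perfect_space,t2_space} \<Rightarrow> 'b::t2_space"
  assumes "isCont h x" "\<forall>\<^sub>F t in at x. g t = h t"
  shows "\<forall>\<^sub>F t in nhds x. (if t = x then Lim (at x) g else g t) = h t"
proof -
  have "(g \<longlongrightarrow> h x) (at x)"
    using isContD[OF assms(1)] assms(2) by (rule Lim_transform_eventually[OF _ eventually_mono]) simp
  then have Lim: "Lim (at x) g = h x"
    by (intro tendsto_Lim) auto
  show ?thesis
    using assms(2) unfolding eventually_at_filter by eventually_elim (auto simp: Lim)
qed

lemma c_scaled_Ints:
  assumes "a \<ge> 6" "j \<le> n"
  shows "2 * of_nat (d n) ^ (a - l) * c a l j n \<in> \<int>"
proof -
  obtain h where h: "int_scaled_taylor (int (d n)) (- of_nat j) h"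
    and eq: "\<forall>\<^sub>F t in at (- of_nat j). R a n t * (t + of_nat j) ^ a = h t / 2"
    using int_scaled_taylor_R[OF assms] by blast
  have an: "h analytic_on {- of_nat j}"
    using h by (simp add: int_scaled_taylor_def)
  have "\<forall>\<^sub>F t in nhds (- of_nat j). Rj a n j t = 1/2 * h t"
    unfolding Rj_def using analytic_at_imp_isCont[OF an] eq
    by (intro Lim_extension_eventually_eq continuous_intros) auto
  then have "(deriv ^^ (a - l)) (Rj a n j) (- of_nat j) = (deriv ^^ (a - l)) (\<lambda>t. 1/2 * h t) (- of_nat j)"
    by (rule higher_deriv_cong_ev[OF _ refl])
  also have "\<dots> = 1/2 * (deriv ^^ (a - l)) h (- of_nat j)"
    by (rule higher_deriv_cmult'[OF an])
  finally have deriv_Rj: "(deriv ^^ (a - l)) (Rj a n j) (- of_nat j) = 1/2 * (deriv ^^ (a - l)) h (- of_nat j)" .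
  have "2 * of_nat (d n) ^ (a - l) * c a l j n
      = of_int (int (d n)) ^ (a - l) * (deriv ^^ (a - l)) h (- of_nat j) / fact (a - l)"
    unfolding c_def Dop_def deriv_Rj by simp
  also have "\<dots> \<in> \<int>"
    using h unfolding int_scaled_taylor_def by blast
  finally show ?thesis .
qed

lemma P0_summand_scaled_Ints:
  assumes "a \<ge> 6" "l \<le> a" "j \<le> n" "1 \<le> k" "k \<le> n"
  shows "2 * of_nat (d n) ^ (a + 2) * (of_nat (l * (l + 1)) * c a l j n / (2 * of_nat k ^ (l + 2))) \<in> \<int>"
proof -
  obtain q where q: "d n = k * q" using dvd_d[OF assms(4,5)] by (elim dvdE)
  obtain p where p: "l * (l + 1) = 2 * p" by (metis dvd_def even_mult_iff even_plus_one_iff)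
  have "a + 2 = (a - l) + (l + 2)" using assms(2) by simp
  then have "(of_nat (d n) :: complex) ^ (a + 2) = of_nat (d n) ^ (a - l) * of_nat (d n) ^ (l + 2)"
    by (metis power_add)
  also have "(of_nat (d n) :: complex) ^ (l + 2) = of_nat k ^ (l + 2) * of_nat q ^ (l + 2)"
    by (simp add: q power_mult_distrib)
  finally have "(of_nat (d n) :: complex) ^ (a + 2) = of_nat (d n) ^ (a - l) * of_nat k ^ (l + 2) * of_nat q ^ (l + 2)"
    by simp
  then have "2 * of_nat (d n) ^ (a + 2) * (of_nat (l * (l + 1)) * c a l j n / (2 * of_nat k ^ (l + 2)))
      = of_nat p * of_nat q ^ (l + 2) * (2 * of_nat (d n) ^ (a - l) * c a l j n)"
    using assms(4) unfolding p by (simp add: field_simps)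
  also have "\<dots> \<in> \<int>"
    by (rule Ints_mult[OF _ c_scaled_Ints[OF assms(1,3)]]) simp
  finally show ?thesis .
qed

lemma int_poly_monom: "z \<in> \<int> \<Longrightarrow> int_poly (monom z k)"
  by (simp add: int_poly_def coeff_monom)

lemma int_poly_sum: "(\<And>i. i \<in> A \<Longrightarrow> int_poly (p i)) \<Longrightarrow> int_poly (\<Sum>i\<in>A. p i)"
  by (simp add: int_poly_def coeff_sum Ints_sum)

lemma int_poly_uminus: "int_poly p \<Longrightarrow> int_poly (- p)"
  by (simp add: int_poly_def)

lemma smult_sum_right: "smult b (\<Sum>i\<in>A. p i) = (\<Sum>i\<in>A. smult b (p i))"
  by (induction A rule: infinite_finite_induct) (simp_all add: smult_add_right)

theorem mainTheorem3:
  fixes a n :: nat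
  assumes "a \<ge> 6" and "n \<ge> 1"
  shows "(\<forall>l\<in>{1..a}. int_poly (smult (2 * of_nat (d n) ^ (a - l)) (Pl a l n)))
       \<and> int_poly (smult (2 * of_nat (d n) ^ (a + 2)) (P0 a n))"
proof (intro conjI ballI)
  fix l
  show "int_poly (smult (2 * of_nat (d n) ^ (a - l)) (Pl a l n))"
    unfolding Pl_def smult_sum_right smult_monom
    using c_scaled_Ints[OF assms(1)] by (intro int_poly_sum int_poly_monom) auto
next
  show "int_poly (smult (2 * of_nat (d n) ^ (a + 2)) (P0 a n))"
    unfolding P0_def smult_minus_right smult_sum_right smult_monom
    using P0_summand_scaled_Ints[OF assms(1)]
    by (intro int_poly_uminus int_poly_sum int_poly_monom) auto
qed

end
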